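(* Let $\mathcal{A}$ be a separating union-closed family with base set $[n]$ and height $h=4$, and let $\mathcal{B}=\{B_1,B_2,B_3\}$ be a choice of $\mathcal{B}(\mathcal{A})$ with $|\mathcal{B}|=3$. Suppose $|B|=n$, where $B=b(\mathcal{A}_{<n/2})$. Then for every $A \in \mathcal{A}_{<n/2}$ and every $i \in \{1,2,3\}$ with $|\mathrm{irr}_{\mathcal{B}}(B_i)| > 1$, we have $|A \cap \mathrm{irr}_{\mathcal{B}}(B_i)| \in \{0,\ |\mathrm{irr}_{\mathcal{B}}(B_i)|-1,\ |\mathrm{irr}_{\mathcal{B}}(B_i)|\}$.
   Context: A family of sets $\mathcal{A}$ is union-closed if it is a finite family of distinct finite sets with at least one nonempty member set, and $X,Y\in\mathcal{A}$ implies $X\cup Y\in\mathcal{A}$ (the empty set may be a member). For a family $\mathcal{F}$, $b(\mathcal{F})=\bigcup_{F\in\mathcal{F}}F$; the base set $b(\mathcal{A})$ is denoted $[n]=\{1,\dots,n\}$. $\mathcal{A}$ is separating if for any two distinct $x,y\in[n]$ there is $A\in\mathcal{A}$ containing exactly one of $x,y$. A chain in $\mathcal{A}$ is a subfamily any two distinct members of which are comparable under proper inclusion; the height $h$ of $\mathcal{A}$ is the maximum size of a chain in $\mathcal{A}$. For real $x\ge 0$, $\mathcal{A}_{<x}=\{A\in\mathcal{A} : |A|<x\}$. For $\mathcal{S}\subseteq\mathcal{A}$ and $S\in\mathcal{S}$, $\mathrm{irr}_{\mathcal{S}}(S)=\{s\in S : s\notin b(\mathcal{S}\setminus\{S\})\}$,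 and $\mathcal{S}$ is irredundant if $\mathrm{irr}_{\mathcal{S}}(S)\neq\emptyset$ for every $S\in\mathcal{S}$. With $B=b(\mathcal{A}_{<n/2})$, $\mathcal{B}(\mathcal{A})$ denotes any irredundant subfamily of $\mathcal{A}_{<n/2}$ of minimum size such that $b(\mathcal{B}(\mathcal{A}))=B$. *)

theory Defs
  imports Complex_Main
begin

definition union_closed :: "'a set set \<Rightarrow> bool" where
  "union_closed \<A> \<longleftrightarrow> finite \<A> \<and> (\<forall>X\<in>\<A>. finite X) \<and> (\<exists>X\<in>\<A>. X \<noteq> {})
     \<and> (\<forall>X\<in>\<A>. \<forall>Y\<in>\<A>. X \<union> Y \<in> \<A>)"

definition base :: "'a set set \<Rightarrow> 'a set" where
  "base \<F> = \<Union>\<F>"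

definition separating :: "'a set set \<Rightarrow> bool" where
  "separating \<A> \<longleftrightarrow> (\<forall>x\<in>base \<A>. \<forall>y\<in>base \<A>. x \<noteq> y \<longrightarrow>
      (\<exists>A\<in>\<A>. (x \<in> A \<and> y \<notin> A) \<or> (y \<in> A \<and> x \<notin> A)))"

definition is_chain :: "'a set set \<Rightarrow> 'a set set \<Rightarrow> bool" where
  "is_chain \<A> \<C> \<longleftrightarrow> \<C> \<subseteq> \<A> \<and> (\<forall>X\<in>\<C>. \<forall>Y\<in>\<C>. X \<noteq> Y \<longrightarrow> X \<subset> Y \<or> Y \<subset> X)"

definition height :: "'a set set \<Rightarrow> nat" where
  "height \<A> = Max {card \<C> | \<C>. is_chain \<A> \<C>}"

definition small_part :: "'a set set \<Rightarrow> real \<Rightarrow> 'a set set" where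
  "small_part \<A> x = {A \<in> \<A>. real (card A) < x}"

definition irr :: "'a set set \<Rightarrow> 'a set \<Rightarrow> 'a set" where
  "irr \<S> S = {s \<in> S. s \<notin> base (\<S> - {S})}"

definition irredundant :: "'a set set \<Rightarrow> bool" where
  "irredundant \<S> \<longleftrightarrow> (\<forall>S\<in>\<S>. irr \<S> S \<noteq> {})"

definition is_B_family :: "'a set set \<Rightarrow> 'a set set \<Rightarrow> bool" where
  "is_B_family \<A> \<B> \<longleftrightarrow>
     (let \<A>s = small_part \<A> (real (card (base \<A>)) / 2) in
       \<B> \<subseteq> \<A>s \<and> irredundant \<B> \<and> base \<B> = base \<A>s \<and>
       (\<forall>\<B>'. \<B>' \<subseteq> \<A>s \<and> irredundant \<B>' \<and> base \<B>' = base \<A>s \<longrightarrow> card \<B> \<le> card \<B>'))"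

end

theory Submission
  imports Defs
begin

text \<open>Let \<open>I = irr {P,Q,R} P = P - (Q \<union> R)\<close>. If some \<open>A \<in> \<A>\<close> meets \<open>I\<close> but misses two points
  of \<open>I\<close>, a set \<open>C \<in> \<A>\<close> separating those two points yields the strict chain
  \<open>Q \<subset> Q \<union> R \<subset> Q \<union> R \<union> A \<subset> Q \<union> R \<union> A \<union> C \<subset> Q \<union> R \<union> A \<union> C \<union> P\<close> in \<open>\<A>\<close>,
  so \<open>\<A>\<close> has height at least 5. Hence for height 4, \<open>A \<inter> I\<close> is empty or misses at most one
  point of \<open>I\<close>.\<close>

lemma sorted_wrt_psubset_length_le_height:
  assumes "finite \<A>" "set Xs \<subseteq> \<A>" "sorted_wrt (\<subset>) Xs"
  shows "length Xs \<le> height \<A>"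
proof -
  have "distinct Xs"
    using assms(3) by (induction Xs) auto
  have "is_chain \<A> (set Xs)"
    using assms(2,3) unfolding is_chain_def by (induction Xs) auto
  moreover have "finite {card \<C> | \<C>. is_chain \<A> \<C>}"
  proof (rule finite_subset)
    show "{card \<C> | \<C>. is_chain \<A> \<C>} \<subseteq> card ` Pow \<A>"
      unfolding is_chain_def by auto
  qed (use assms(1) in simp)
  ultimately have "card (set Xs) \<le> height \<A>"
    unfolding height_def by (auto intro: Max_ge)
  with \<open>distinct Xs\<close> show ?thesis
    by (simp add: distinct_card)
qed

lemma separatingE:
  assumes "separating \<A>" "x \<in> base \<A>" "y \<in> base \<A>" "x \<noteq> y"
  obtains C u v where "C \<in> \<A>" "u \<in> C" "v \<notin> C" "{u, v} = {x, y}"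
  using assms unfolding separating_def by blast

lemma irr_three:
  assumes "P \<noteq> Q" "P \<noteq> R" "Q \<noteq> R"
  shows "irr {P, Q, R} P = P - (Q \<union> R)"
  using assms by (auto simp: irr_def base_def)

lemma card_Int_trichotomy:
  assumes "finite I" "A \<inter> I = {} \<or> card (I - A) \<le> 1"
  shows "card (A \<inter> I) \<in> {0, card I - 1, card I}"
proof -
  have "card I = card (A \<inter> I) + card (I - A)"
    using assms(1) card_Int_Diff[of I A] by (simp add: Int_commute)
  moreover have "card (A \<inter> I) = 0 \<or> card (I - A) = 0 \<or> card (I - A) = 1"
    using assms(2) by (auto simp: le_Suc_eq)
  ultimately show ?thesis
    by auto
qed

lemma height_ge_5_if_split_remainder:
  assumes uc: "union_closed \<A>" and sep: "separating \<A>"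
    and sets: "P \<in> \<A>" "Q \<in> \<A>" "R \<in> \<A>" "A \<in> \<A>"
    and "\<not> R \<subseteq> Q"
    and meets: "A \<inter> (P - (Q \<union> R)) \<noteq> {}"
    and misses: "2 \<le> card (P - (Q \<union> R) - A)"
  shows "5 \<le> height \<A>"
proof -
  let ?I = "P - (Q \<union> R)"
  obtain x y where xy: "x \<in> ?I - A" "y \<in> ?I - A" "x \<noteq> y"
    using misses by (auto simp: numeral_2_eq_2 card_le_Suc_iff)
  have "x \<in> base \<A>" "y \<in> base \<A>"
    using xy sets(1) by (auto simp: base_def)
  with sep xy(3) obtain C u v where C: "C \<in> \<A>" "u \<in> C" "v \<notin> C" "{u, v} = {x, y}"
    by (metis separatingE)
  have uv: "u \<in> ?I - A" "v \<in> ?I - A"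
    using C(4) xy by auto
  have closed: "\<And>X Y. X \<in> \<A> \<Longrightarrow> Y \<in> \<A> \<Longrightarrow> X \<union> Y \<in> \<A>" and "finite \<A>"
    using uc by (auto simp: union_closed_def)
  let ?chain = "[Q, Q \<union> R, Q \<union> R \<union> A, Q \<union> R \<union> A \<union> C, Q \<union> R \<union> A \<union> C \<union> P]"
  have "set ?chain \<subseteq> \<A>"
    using sets C(1) by (simp add: closed)
  moreover have "sorted_wrt (\<subset>) ?chain"
    using \<open>\<not> R \<subseteq> Q\<close> meets C(2,3) uv by auto
  ultimately have "length ?chain \<le> height \<A>"
    using \<open>finite \<A>\<close> sorted_wrt_psubset_length_le_height by blast
  then show ?thesis
    by simp
qed

lemma card_Int_irr_trichotomy:
  assumes uc: "union_closed \<A>" and sep: "separating \<A>" and "height \<A> \<le> 4"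
    and sets: "P \<in> \<A>" "Q \<in> \<A>" "R \<in> \<A>" "A \<in> \<A>"
    and distinct: "P \<noteq> Q" "P \<noteq> R" "Q \<noteq> R"
    and "irr {P, Q, R} R \<noteq> {}"
  shows "card (A \<inter> irr {P, Q, R} P) \<in> {0, card (irr {P, Q, R} P) - 1, card (irr {P, Q, R} P)}"
proof -
  have "irr {P, Q, R} R = irr {R, P, Q} R"
    by (metis insert_commute)
  then have "\<not> R \<subseteq> Q"
    using \<open>irr {P, Q, R} R \<noteq> {}\<close> irr_three[of R P Q] distinct by auto
  moreover have "finite P"
    using uc sets(1) by (auto simp: union_closed_def)
  ultimately have "A \<inter> (P - (Q \<union> R)) = {} \<or> card (P - (Q \<union> R) - A) \<le> 1"
    using height_ge_5_if_split_remainder[OF uc sep sets] \<open>height \<A> \<le> 4\<close> by fastforce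
  with \<open>finite P\<close> show ?thesis
    unfolding irr_three[OF distinct] by (intro card_Int_trichotomy) auto
qed

theorem propositionH:
  fixes \<A> :: "nat set set" and n :: nat and B1 B2 B3 :: "nat set"
  assumes "union_closed \<A>"
    and "base \<A> = {1..n}"
    and "separating \<A>"
    and "height \<A> = 4"
    and "B1 \<noteq> B2" and "B1 \<noteq> B3" and "B2 \<noteq> B3"
    and "is_B_family \<A> {B1, B2, B3}"
    and "card (base (small_part \<A> (real n / 2))) = n"
  shows "\<forall>A \<in> small_part \<A> (real n / 2). \<forall>Bi \<in> {B1, B2, B3}.
           card (irr {B1, B2, B3} Bi) > 1 \<longrightarrow>
           card (A \<inter> irr {B1, B2, B3} Bi) \<in>
             {0, card (irr {B1, B2, B3} Bi) - 1, card (irr {B1, B2, B3} Bi)}"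
proof (intro ballI impI)
  fix A Bi
  assume A: "A \<in> small_part \<A> (real n / 2)" and Bi: "Bi \<in> {B1, B2, B3}"
  have "{B1, B2, B3} \<subseteq> \<A>" "A \<in> \<A>" and irred: "irredundant {B1, B2, B3}"
    using assms(8) A unfolding is_B_family_def small_part_def Let_def by auto
  obtain Q R where QR: "{B1, B2, B3} = {Bi, Q, R}" "Bi \<noteq> Q" "Bi \<noteq> R" "Q \<noteq> R"
    using Bi assms(5-7) by (auto simp: insert_commute)
  show "card (A \<inter> irr {B1, B2, B3} Bi) \<in>
          {0, card (irr {B1, B2, B3} Bi) - 1, card (irr {B1, B2, B3} Bi)}"
    unfolding QR(1)
  proof (rule card_Int_irr_trichotomy[OF assms(1,3)])
    show "irr {Bi, Q, R} R \<noteq> {}"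
      using irred unfolding QR(1) irredundant_def by blast
  qed (use QR \<open>{B1, B2, B3} \<subseteq> \<A>\<close> \<open>A \<in> \<A>\<close> assms(4) in auto)
qed

end
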